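(* Let $\sigma>0$, $\mu\in\mathbb{R}$, $\rho(x)=\frac1{\sqrt{2\pi\sigma^2}}e^{-\frac{(x-\mu)^2}{2\sigma^2}}$ and $\alpha_n=\int_\mathbb{R}\psi_n(x)\rho(x)\,\mathrm{d}x$ for $n\in\mathbb{N}\cup\{0\}$. Let $$\lambda=\begin{cases}\frac14\log\left|\frac{\sigma^2+1}{\sigma^2-1}\right|,&\text{if }\sigma^2\neq1,\\ \frac14,&\text{if }\sigma^2=1.\end{cases}$$ If $N\in\mathbb{N}$ satisfies $$N\ge\begin{cases}\frac{32\mu^2}{|\sigma^4-1|}\left(\log\left|\frac{\sigma^2+1}{\sigma^2-1}\right|\right)^{-2},&\text{if }\sigma^2\neq1,\\ \frac{e^{3/2}\mu^2}{2},&\text{if }\sigma^2=1,\end{cases}$$ then $$\left(\sum_{n=N}^\infty\alpha_n^2\right)^{1/2}\le\frac{1}{\pi^{1/4}\sqrt{(\sigma^2+1)(1-e^{-2\lambda})}}e^{-\frac{\mu^2}{2(\sigma^2+1)}-\lambda N}.$$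
   Context: $H_n$ is the $n$-th physicist's Hermite polynomial and $\psi_n(x)=\frac{1}{\sqrt{\sqrt\pi\,2^n n!}}e^{-x^2/2}H_n(x)$ are the Hermite functions. *)

theory Defs
  imports "HOL-Analysis.Analysis"
begin

fun hermite :: "nat \<Rightarrow> real \<Rightarrow> real" where
  "hermite 0 x = 1"
| "hermite (Suc 0) x = 2 * x"
| "hermite (Suc (Suc n)) x = 2 * x * hermite (Suc n) x - 2 * real (Suc n) * hermite n x"

definition hermite_fun :: "nat \<Rightarrow> real \<Rightarrow> real" where
  "hermite_fun n x = exp (- (x^2) / 2) * hermite n x / sqrt (sqrt pi * 2 ^ n * fact n)"

definition gauss_density :: "real \<Rightarrow> real \<Rightarrow> real \<Rightarrow> real" where
  "gauss_density \<sigma> \<mu> x = exp (- ((x - \<mu>)^2) / (2 * \<sigma>^2)) / sqrt (2 * pi * \<sigma>^2)"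

end

theory Submission
  imports Defs "HOL-Probability.Probability" "HOL-Real_Asymp.Real_Asymp"
    "HOL-Computational_Algebra.Polynomial"
begin

(* Completing the square, psi_n(x) rho(x) is a constant multiple of H_n(x) times the normal
   density with mean m = mu/(sigma^2+1) and variance t^2 = sigma^2/(sigma^2+1). Gaussian
   integration by parts (Stein's identity) turns the three-term recurrence of H_n into a
   recurrence for the moments M_n of H_n under this density: M_n = gen_hermite r n m with
   r = 2 t^2 - 1 = (sigma^2-1)/(sigma^2+1), so |r| < 1. Expanding M_n binomially in 2m and
   applying Cauchy-Schwarz with a free weight eps > 0 gives
   M_n^2 <= (|r| + eps)^n 2^n n! exp(2 m^2 / eps), while alpha_n^2 = C M_n^2 / (2^n n!).
   For n >= N the choice eps = |r| lambda (eps = exp(-3/2) if r = 0) yields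
   alpha_n^2 <= C exp(-2 lambda n), and the tail is dominated by a geometric series. *)

lemma square_sum_le_of_square_le_mult:
  fixes x u v :: "'a \<Rightarrow> real"
  assumes "\<And>j. j \<in> A \<Longrightarrow> 0 \<le> u j" "\<And>j. j \<in> A \<Longrightarrow> 0 \<le> v j"
    and "\<And>j. j \<in> A \<Longrightarrow> (x j)\<^sup>2 \<le> u j * v j"
  shows "(\<Sum>j\<in>A. x j)\<^sup>2 \<le> (\<Sum>j\<in>A. u j) * (\<Sum>j\<in>A. v j)"
proof -
  have "\<bar>x j\<bar> \<le> sqrt (u j) * sqrt (v j)" if "j \<in> A" for j
    using real_sqrt_le_mono[OF assms(3)[OF that]] by (simp add: real_sqrt_mult)
  then have "\<bar>\<Sum>j\<in>A. x j\<bar> \<le> (\<Sum>j\<in>A. sqrt (u j) * sqrt (v j))"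
    using sum_abs[of x A] sum_mono[of A "\<lambda>j. \<bar>x j\<bar>"] by (meson order_trans)
  then have "(\<Sum>j\<in>A. x j)\<^sup>2 \<le> (\<Sum>j\<in>A. sqrt (u j) * sqrt (v j))\<^sup>2"
    by (metis abs_ge_zero power2_abs power_mono)
  also have "\<dots> \<le> (\<Sum>j\<in>A. (sqrt (u j))\<^sup>2) * (\<Sum>j\<in>A. (sqrt (v j))\<^sup>2)"
    by (rule Cauchy_Schwarz_ineq_sum)
  also have "\<dots> = (\<Sum>j\<in>A. u j) * (\<Sum>j\<in>A. v j)"
    using assms(1,2) by simp
  finally show ?thesis .
qed

lemma sum_power_div_fact_le_exp:
  fixes y :: real
  assumes "0 \<le> y"
  shows "(\<Sum>j\<le>n. y ^ j / fact j) \<le> exp y"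
proof -
  have exp_sums: "(\<lambda>j. y ^ j / fact j) sums exp y"
    using exp_converges[of y] by (simp add: field_simps)
  have "sum (\<lambda>j. y ^ j / fact j) {..<Suc n} \<le> (\<Sum>j. y ^ j / fact j)"
    using sums_summable[OF exp_sums] assms by (intro sum_le_suminf) auto
  then show ?thesis
    unfolding lessThan_Suc_atMost sums_unique[OF exp_sums, symmetric] .
qed

lemma sum_choose_Suc_eq:
  fixes f :: "nat \<Rightarrow> real"
  shows "(\<Sum>j\<le>Suc n. real (Suc n choose j) * f j)
    = (\<Sum>j\<le>n. real (n choose j) * f j) + (\<Sum>j\<le>n. real (n choose j) * f (Suc j))"
proof -
  have "(\<Sum>j\<le>n. real (n choose j) * f j) = (\<Sum>j\<le>Suc n. real (n choose j) * f j)"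
    by simp
  also have "\<dots> = f 0 + (\<Sum>j\<le>n. real (n choose Suc j) * f (Suc j))"
    by (subst sum.atMost_Suc_shift) simp
  finally show ?thesis
    by (subst sum.atMost_Suc_shift) (simp add: sum.distrib algebra_simps)
qed

lemma sum_choose_fact_power_eq:
  fixes y :: real
  shows "(\<Sum>j\<le>n. real (n choose j) * fact (n - j) * 2 ^ (n - j) * y ^ j)
    = 2 ^ n * fact n * (\<Sum>j\<le>n. (y / 2) ^ j / fact j)"
  unfolding sum_distrib_left
proof (intro sum.cong refl)
  fix j assume "j \<in> {..n}"
  then have "real (n choose j) * fact (n - j) = fact n / fact j"
    and "(2::real) ^ (n - j) = 2 ^ n / 2 ^ j"
    by (simp_all add: binomial_fact power_diff)
  then show "real (n choose j) * fact (n - j) * 2 ^ (n - j) * y ^ j = 2 ^ n * fact n * ((y / 2) ^ j / fact j)"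
    by (simp add: power_divide mult_ac)
qed

lemma suminf_shift_le_geometric:
  fixes f :: "nat \<Rightarrow> real"
  assumes "\<And>n. n \<ge> N \<Longrightarrow> 0 \<le> f n" "\<And>n. n \<ge> N \<Longrightarrow> f n \<le> c * q ^ n"
    and "0 \<le> q" "q < 1"
  shows "(\<Sum>n. f (n + N)) \<le> c * q ^ N / (1 - q)"
proof -
  have "(\<lambda>n. c * q ^ N * q ^ n) sums (c * q ^ N * (1 / (1 - q)))"
    using assms(3,4) by (intro sums_mult geometric_sums) auto
  then have geometric: "(\<lambda>n. c * q ^ N * q ^ n) sums (c * q ^ N / (1 - q))"
    by simp
  have bound: "f (n + N) \<le> c * q ^ N * q ^ n" for n
    using assms(2)[of "n + N"] by (simp add: power_add mult_ac)
  have "summable (\<lambda>n. f (n + N))"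
    using assms(1) bound by (intro summable_comparison_test[OF _ sums_summable[OF geometric]]) auto
  then have "(\<Sum>n. f (n + N)) \<le> (\<Sum>n. c * q ^ N * q ^ n)"
    by (rule suminf_le[OF bound _ sums_summable[OF geometric]])
  also have "\<dots> = c * q ^ N / (1 - q)"
    using geometric by (rule sums_unique[symmetric])
  finally show ?thesis .
qed

lemma hermite_Suc: "hermite (Suc n) x = 2 * x * hermite n x - 2 * real n * hermite (n - 1) x"
  by (cases n) simp_all

lemma hermite_has_real_derivative:
  "(hermite n has_real_derivative 2 * real n * hermite (n - 1) x) (at x)"
proof (induction n x rule: hermite.induct)
  case (3 n x)
  have recurrence: "hermite (Suc (Suc n)) = (\<lambda>x. 2 * x * hermite (Suc n) x - 2 * real (Suc n) * hermite n x)"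
    by (simp add: fun_eq_iff)
  have "((\<lambda>x. 2 * x * hermite (Suc n) x - 2 * real (Suc n) * hermite n x) has_real_derivative
      2 * hermite (Suc n) x + 2 * x * (2 * real (Suc n) * hermite n x)
      - 2 * real (Suc n) * (2 * real n * hermite (n - 1) x)) (at x)"
    using 3 by (auto intro!: derivative_eq_intros simp: algebra_simps)
  also have "2 * hermite (Suc n) x + 2 * x * (2 * real (Suc n) * hermite n x)
      - 2 * real (Suc n) * (2 * real n * hermite (n - 1) x) = 2 * real (Suc (Suc n)) * hermite (Suc n) x"
    by (simp only: hermite_Suc[of n]) (simp add: algebra_simps)
  finally show ?case
    by (simp only: recurrence diff_Suc_1)
qed (auto intro!: derivative_eq_intros)

fun hermite_poly :: "nat \<Rightarrow> real poly" where
  "hermite_poly 0 = 1"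
| "hermite_poly (Suc 0) = [:0, 2:]"
| "hermite_poly (Suc (Suc n)) = [:0, 2:] * hermite_poly (Suc n) - smult (2 * real (Suc n)) (hermite_poly n)"

lemma poly_hermite_poly [simp]: "poly (hermite_poly n) = hermite n"
  by (induction n rule: hermite_poly.induct) auto

lemma poly_pderiv_hermite_poly:
  "poly (pderiv (hermite_poly n)) x = 2 * real n * hermite (n - 1) x"
proof -
  have "(poly (hermite_poly n) has_real_derivative 2 * real n * hermite (n - 1) x) (at x)"
    using hermite_has_real_derivative by simp
  then show ?thesis
    by (rule DERIV_unique[OF poly_DERIV])
qed

context
  fixes m t :: real
  assumes t_pos: "t > 0"
begin

lemma normal_density_times_poly_eq_sum:
  "normal_density m t x * poly p x
     = (\<Sum>i\<le>degree (p \<circ>\<^sub>p [:m, 1:]). coeff (p \<circ>\<^sub>p [:m, 1:]) i * (normal_density m t x * (x - m) ^ i))"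
proof -
  have "poly p x = poly (p \<circ>\<^sub>p [:m, 1:]) (x - m)"
    by (simp add: poly_pcompose)
  then show ?thesis
    by (simp add: poly_altdef sum_distrib_left mult_ac)
qed

lemma integrable_normal_density_times_poly:
  "integrable lborel (\<lambda>x. normal_density m t x * poly p x)"
  unfolding normal_density_times_poly_eq_sum
  by (intro Bochner_Integration.integrable_sum integrable_mult_right integrable_normal_moment t_pos)

lemma integrable_normal_density_times_shifted_poly:
  "integrable lborel (\<lambda>x. normal_density m t x * ((x - m) * poly p x))"
  using integrable_normal_density_times_poly[of "[:- m, 1:] * p"] by (simp add: algebra_simps)

lemma normal_density_times_poly_tendsto_0:
  "((\<lambda>x. normal_density m t x * poly p x) \<longlongrightarrow> 0) at_top"
  "((\<lambda>x. normal_density m t x * poly p x) \<longlongrightarrow> 0) at_bot"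
proof -
  have "((\<lambda>x. normal_density m t x * (x - m) ^ i) \<longlongrightarrow> 0) at_top"
    and "((\<lambda>x. normal_density m t x * (x - m) ^ i) \<longlongrightarrow> 0) at_bot" for i
    using t_pos unfolding normal_density_def by real_asymp+
  then show "((\<lambda>x. normal_density m t x * poly p x) \<longlongrightarrow> 0) at_top"
    and "((\<lambda>x. normal_density m t x * poly p x) \<longlongrightarrow> 0) at_bot"
    unfolding normal_density_times_poly_eq_sum by (auto intro!: tendsto_null_sum tendsto_mult_right_zero)
qed

lemma normal_density_has_real_derivative:
  "(normal_density m t has_real_derivative - (x - m) / t\<^sup>2 * normal_density m t x) (at x)"
proof -
  define c where "c = 1 / sqrt (2 * pi * t\<^sup>2)"
  have "((\<lambda>x. c * exp (- (x - m)\<^sup>2 / (2 * t\<^sup>2))) has_real_derivative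
      - (x - m) / t\<^sup>2 * (c * exp (- (x - m)\<^sup>2 / (2 * t\<^sup>2)))) (at x)"
    using t_pos by (auto intro!: derivative_eq_intros simp: field_simps power2_eq_square)
  then show ?thesis
    by (simp add: normal_density_def[abs_def] c_def)
qed

lemma integral_normal_density_stein_poly:
  "(LBINT x. normal_density m t x * ((x - m) * poly p x))
     = t\<^sup>2 * (LBINT x. normal_density m t x * poly (pderiv p) x)"
proof -
  define F where "F x = normal_density m t x * poly p x" for x
  define f where "f x = normal_density m t x * poly (pderiv p) x
      - normal_density m t x * ((x - m) * poly p x) / t\<^sup>2" for x
  have f_integrable: "integrable lborel f"
    unfolding f_def
    by (intro Bochner_Integration.integrable_diff integrable_divide integrable_normal_density_times_shifted_poly
        integrable_normal_density_times_poly)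
  have "(F has_real_derivative f x) (at x)" for x
    unfolding F_def[abs_def] f_def using t_pos
    by (auto intro!: derivative_eq_intros normal_density_has_real_derivative simp: field_simps)
  moreover have "isCont f x" for x
    unfolding f_def normal_density_def by (intro continuous_intros) (use t_pos in auto)
  ultimately have "(LBINT x=-\<infinity>..\<infinity>. f x) = 0 - 0"
    using f_integrable normal_density_times_poly_tendsto_0[of p]
    by (intro interval_integral_FTC_integrable[where F = F])
      (auto simp: set_integrable_def F_def[abs_def] has_real_derivative_iff_has_vector_derivative
        ereal_tendsto_simps1)
  moreover have "(LBINT x=-\<infinity>..\<infinity>. f x) = (LBINT x. normal_density m t x * poly (pderiv p) x)
      - (LBINT x. normal_density m t x * ((x - m) * poly p x)) / t\<^sup>2"
    unfolding f_def
    by (simp add: interval_lebesgue_integral_def set_lebesgue_integral_def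
        integrable_normal_density_times_shifted_poly integrable_normal_density_times_poly)
  ultimately show ?thesis
    using t_pos by (simp add: field_simps)
qed

end

(* The Hermite recurrence with the coefficient -1 replaced by r: gen_hermite (-1) = hermite. *)
fun gen_hermite :: "real \<Rightarrow> nat \<Rightarrow> real \<Rightarrow> real" where
  "gen_hermite r 0 a = 1"
| "gen_hermite r (Suc 0) a = 2 * a"
| "gen_hermite r (Suc (Suc n)) a = 2 * a * gen_hermite r (Suc n) a + 2 * real (Suc n) * r * gen_hermite r n a"

lemma integral_normal_density_hermite:
  assumes t_pos: "t > 0"
  shows "(LBINT x. normal_density m t x * hermite n x) = gen_hermite (2 * t\<^sup>2 - 1) n m"
proof (induction n rule: induct_nat_012)
  case 0
  then show ?case
    using t_pos by simp
next
  case 1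
  have "(LBINT x. normal_density m t x * hermite (Suc 0) x) = (LBINT x. 2 * (normal_density m t x * x))"
    by (simp add: mult_ac)
  then show ?case
    using integral_normal_moment_nz_1[OF t_pos] by simp
next
  case (ge2 n)
  note integrable =
    integrable_normal_density_times_poly[OF t_pos, of m "hermite_poly n"]
    integrable_normal_density_times_poly[OF t_pos, of m "hermite_poly (Suc n)"]
    integrable_normal_density_times_shifted_poly[OF t_pos, of m "hermite_poly (Suc n)"]
  have "(LBINT x. normal_density m t x * ((x - m) * hermite (Suc n) x))
      = t\<^sup>2 * (LBINT x. 2 * real (Suc n) * (normal_density m t x * hermite n x))"
    using integral_normal_density_stein_poly[OF t_pos, of m "hermite_poly (Suc n)"]
    by (simp add: poly_pderiv_hermite_poly ac_simps)
  then have stein: "(LBINT x. normal_density m t x * ((x - m) * hermite (Suc n) x))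
      = t\<^sup>2 * (2 * real (Suc n) * (LBINT x. normal_density m t x * hermite n x))"
    by simp
  have "normal_density m t x * hermite (Suc (Suc n)) x
      = 2 * (normal_density m t x * ((x - m) * hermite (Suc n) x))
        + 2 * m * (normal_density m t x * hermite (Suc n) x)
        - 2 * real (Suc n) * (normal_density m t x * hermite n x)" for x
    by (simp add: algebra_simps)
  then have "(LBINT x. normal_density m t x * hermite (Suc (Suc n)) x)
      = 2 * (LBINT x. normal_density m t x * ((x - m) * hermite (Suc n) x))
        + 2 * m * (LBINT x. normal_density m t x * hermite (Suc n) x)
        - 2 * real (Suc n) * (LBINT x. normal_density m t x * hermite n x)"
    using integrable by simp
  then show ?case
    unfolding stein ge2 by (simp add: algebra_simps)
qed

lemma gen_hermite_eq_binomial_sum: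
  "gen_hermite r n a = (\<Sum>j\<le>n. real (n choose j) * (2 * a) ^ j * gen_hermite r (n - j) 0)"
proof (induction n rule: induct_nat_012)
  case (ge2 n)
  define S where "S n = (\<Sum>j\<le>n. real (n choose j) * ((2 * a) ^ j * gen_hermite r (n - j) 0))" for n
  have summand: "real (Suc n choose j) * ((2 * a) ^ j * gen_hermite r (Suc (Suc n) - j) 0)
      = 2 * real (Suc n) * r * (real (n choose j) * ((2 * a) ^ j * gen_hermite r (n - j) 0))"
    if "j \<in> {..n}" for j
  proof -
    have "gen_hermite r (Suc (Suc n) - j) 0 = 2 * real (Suc n - j) * r * gen_hermite r (n - j) 0"
      using that by (simp add: Suc_diff_le)
    then have "real (Suc n choose j) * ((2 * a) ^ j * gen_hermite r (Suc (Suc n) - j) 0)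
        = 2 * r * (2 * a) ^ j * gen_hermite r (n - j) 0 * (real (Suc n choose j) * real (Suc n - j))"
      by (simp only: mult_ac)
    also have "real (Suc n choose j) * real (Suc n - j) = real (Suc n) * real (n choose j)"
      using binomial_absorb_comp[of "Suc n" j] by (metis diff_Suc_1 of_nat_mult mult.commute)
    finally show ?thesis
      by (simp only: mult_ac)
  qed
  have "S (Suc (Suc n))
      = (\<Sum>j\<le>Suc n. real (Suc n choose j) * ((2 * a) ^ j * gen_hermite r (Suc (Suc n) - j) 0))
        + (\<Sum>j\<le>Suc n. real (Suc n choose j) * ((2 * a) ^ Suc j * gen_hermite r (Suc n - j) 0))"
    unfolding S_def by (subst sum_choose_Suc_eq) simp
  also have "(\<Sum>j\<le>Suc n. real (Suc n choose j) * ((2 * a) ^ j * gen_hermite r (Suc (Suc n) - j) 0))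
      = (\<Sum>j\<le>n. real (Suc n choose j) * ((2 * a) ^ j * gen_hermite r (Suc (Suc n) - j) 0))"
    by simp
  also have "\<dots> = 2 * real (Suc n) * r * S n"
    unfolding S_def sum_distrib_left by (rule sum.cong[OF refl summand])
  also have "(\<Sum>j\<le>Suc n. real (Suc n choose j) * ((2 * a) ^ Suc j * gen_hermite r (Suc n - j) 0))
      = 2 * a * S (Suc n)"
    unfolding S_def sum_distrib_left by (simp add: mult_ac)
  finally show ?case
    using ge2 unfolding S_def by (simp add: mult.assoc)
qed simp_all

lemma gen_hermite_0_sq_le: "(gen_hermite r k 0)\<^sup>2 \<le> fact k * 2 ^ k * \<bar>r\<bar> ^ k"
proof (induction k rule: induct_nat_012)
  case (ge2 k)
  define c where "c = 4 * real (Suc k) * fact k * 2 ^ k * \<bar>r\<bar> ^ k * r\<^sup>2"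
  have "(gen_hermite r (Suc (Suc k)) 0)\<^sup>2 = (2 * real (Suc k))\<^sup>2 * r\<^sup>2 * (gen_hermite r k 0)\<^sup>2"
    by (simp add: power_mult_distrib)
  also have "\<dots> \<le> (2 * real (Suc k))\<^sup>2 * r\<^sup>2 * (fact k * 2 ^ k * \<bar>r\<bar> ^ k)"
    using ge2(1) by (intro mult_left_mono) auto
  also have "\<dots> = c * real (Suc k)"
    by (simp add: c_def power2_eq_square algebra_simps)
  also have "\<dots> \<le> c * real (Suc (Suc k))"
    by (intro mult_left_mono) (auto simp: c_def)
  also have "\<dots> = fact (Suc (Suc k)) * 2 ^ Suc (Suc k) * \<bar>r\<bar> ^ Suc (Suc k)"
    by (simp add: c_def power2_eq_square)
  finally show ?case .
qed simp_all

lemma gen_hermite_sq_le: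
  assumes e_pos: "e > 0"
  shows "(gen_hermite r n a)\<^sup>2 \<le> (\<bar>r\<bar> + e) ^ n * 2 ^ n * fact n * exp (2 * a\<^sup>2 / e)"
proof -
  define u where "u j = real (n choose j) * e ^ j * \<bar>r\<bar> ^ (n - j)" for j
  define v where "v j = real (n choose j) * fact (n - j) * 2 ^ (n - j) * (4 * a\<^sup>2 / e) ^ j" for j
  have "u j \<ge> 0" "v j \<ge> 0" for j
    using e_pos by (simp_all add: u_def v_def)
  then have "(gen_hermite r n a)\<^sup>2 \<le> (\<Sum>j\<le>n. u j) * (\<Sum>j\<le>n. v j)"
    unfolding gen_hermite_eq_binomial_sum[of r n a]
  proof (intro square_sum_le_of_square_le_mult)
    fix j
    have "((2 * a) ^ j)\<^sup>2 = ((2 * a)\<^sup>2) ^ j"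
      by (simp only: power_mult[symmetric] mult.commute)
    then have "(real (n choose j) * (2 * a) ^ j * gen_hermite r (n - j) 0)\<^sup>2
        = (real (n choose j))\<^sup>2 * (4 * a\<^sup>2) ^ j * (gen_hermite r (n - j) 0)\<^sup>2"
      by (simp add: power_mult_distrib)
    also have "\<dots> \<le> (real (n choose j))\<^sup>2 * (4 * a\<^sup>2) ^ j * (fact (n - j) * 2 ^ (n - j) * \<bar>r\<bar> ^ (n - j))"
      by (intro mult_left_mono gen_hermite_0_sq_le) auto
    also have "\<dots> = u j * v j"
      unfolding u_def v_def using e_pos by (simp add: power2_eq_square power_divide)
    finally show "(real (n choose j) * (2 * a) ^ j * gen_hermite r (n - j) 0)\<^sup>2 \<le> u j * v j" .
  qed
  also have "(\<Sum>j\<le>n. u j) = (e + \<bar>r\<bar>) ^ n"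
    unfolding u_def binomial_ring by (simp add: mult.assoc)
  also have "(\<Sum>j\<le>n. v j) = 2 ^ n * fact n * (\<Sum>j\<le>n. (2 * a\<^sup>2 / e) ^ j / fact j)"
    unfolding v_def sum_choose_fact_power_eq by simp
  also have "(e + \<bar>r\<bar>) ^ n * (2 ^ n * fact n * (\<Sum>j\<le>n. (2 * a\<^sup>2 / e) ^ j / fact j))
      \<le> (e + \<bar>r\<bar>) ^ n * (2 ^ n * fact n * exp (2 * a\<^sup>2 / e))"
    using e_pos by (intro mult_left_mono sum_power_div_fact_le_exp) auto
  finally show ?thesis
    by (simp add: algebra_simps)
qed

lemma gen_hermite_sq_le_exp_decay:
  assumes e_pos: "e > 0" and n_pos: "n > 0"
    and rate: "(\<bar>r\<bar> + e) * exp (2 * a\<^sup>2 / (e * real n)) \<le> exp (- 2 * lam)"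
  shows "(gen_hermite r n a)\<^sup>2 \<le> 2 ^ n * fact n * exp (- 2 * lam * real n)"
proof -
  have "exp (2 * a\<^sup>2 / e) = exp (2 * a\<^sup>2 / (e * real n)) ^ n"
    using n_pos by (simp flip: exp_of_nat_mult)
  then have "(\<bar>r\<bar> + e) ^ n * exp (2 * a\<^sup>2 / e) = ((\<bar>r\<bar> + e) * exp (2 * a\<^sup>2 / (e * real n))) ^ n"
    by (simp add: power_mult_distrib)
  also have "\<dots> \<le> exp (- 2 * lam) ^ n"
    using e_pos rate by (intro power_mono) auto
  also have "\<dots> = exp (- 2 * lam * real n)"
    by (simp flip: exp_of_nat_mult add: mult_ac)
  finally have "(\<bar>r\<bar> + e) ^ n * exp (2 * a\<^sup>2 / e) \<le> exp (- 2 * lam * real n)" .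
  then have "(\<bar>r\<bar> + e) ^ n * 2 ^ n * fact n * exp (2 * a\<^sup>2 / e) \<le> 2 ^ n * fact n * exp (- 2 * lam * real n)"
    by (simp add: mult_left_mono mult.left_commute)
  then show ?thesis
    using gen_hermite_sq_le[OF e_pos, of r n a] by linarith
qed

lemma gen_hermite_0_sq_le_exp_decay:
  assumes n_pos: "n > 0" and "2 * exp (3/2) * a\<^sup>2 \<le> real n"
  shows "(gen_hermite 0 n a)\<^sup>2 \<le> 2 ^ n * fact n * exp (- real n / 2)"
proof -
  have "2 * a\<^sup>2 / (exp (- 3/2) * real n) \<le> 1"
    using assms by (simp add: exp_minus field_simps)
  then have "exp (- 3/2) * exp (2 * a\<^sup>2 / (exp (- 3/2) * real n)) \<le> exp (- 3/2) * exp 1"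
    by simp
  also have "\<dots> = exp (- 2 * (1/4))"
    by (simp flip: exp_add)
  finally have "(\<bar>0\<bar> + exp (- 3/2)) * exp (2 * a\<^sup>2 / (exp (- 3/2) * real n)) \<le> exp (- 2 * (1/4))"
    by simp
  from gen_hermite_sq_le_exp_decay[OF _ n_pos this] show ?thesis
    by simp
qed

lemma gen_hermite_sq_le_exp_decay_ln_abs:
  assumes r: "0 < \<bar>r\<bar>" "\<bar>r\<bar> < 1" and lam: "lam = - ln \<bar>r\<bar> / 4"
    and n: "n > 0" "2 * a\<^sup>2 / (\<bar>r\<bar> * lam\<^sup>2) \<le> real n"
  shows "(gen_hermite r n a)\<^sup>2 \<le> 2 ^ n * fact n * exp (- 2 * lam * real n)"
proof (rule gen_hermite_sq_le_exp_decay)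
  have lam_pos: "lam > 0"
    using r lam by simp
  have abs_r: "\<bar>r\<bar> = exp (- 4 * lam)"
    using r lam by simp
  show "\<bar>r\<bar> * lam > 0"
    using r lam_pos by simp
  have "\<bar>r\<bar> + \<bar>r\<bar> * lam = exp (- 4 * lam) * (1 + lam)"
    unfolding abs_r by (simp add: algebra_simps)
  also have "\<dots> \<le> exp (- 4 * lam) * exp lam"
    by (intro mult_left_mono) auto
  finally have "\<bar>r\<bar> + \<bar>r\<bar> * lam \<le> exp (- 4 * lam) * exp lam" .
  moreover have "2 * a\<^sup>2 / (\<bar>r\<bar> * lam * real n) \<le> lam"
    using n r lam_pos by (simp add: field_simps power2_eq_square)
  ultimately have "(\<bar>r\<bar> + \<bar>r\<bar> * lam) * exp (2 * a\<^sup>2 / (\<bar>r\<bar> * lam * real n))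
      \<le> exp (- 4 * lam) * exp lam * exp lam"
    by (intro mult_mono) auto
  then show "(\<bar>r\<bar> + \<bar>r\<bar> * lam) * exp (2 * a\<^sup>2 / (\<bar>r\<bar> * lam * real n)) \<le> exp (- 2 * lam)"
    by (simp flip: exp_add)
qed (use n in auto)

lemma gaussian_exponent_complete_square:
  fixes s :: real
  assumes "s > 0"
  shows "- x\<^sup>2 / 2 - (x - \<mu>)\<^sup>2 / (2 * s)
    = - \<mu>\<^sup>2 / (2 * (s + 1)) - (x - \<mu> / (s + 1))\<^sup>2 / (2 * (s / (s + 1)))"
proof -
  define u where "u = s + 1"
  have "u > 0"
    using assms by (simp add: u_def)
  then have "(x - \<mu> / u)\<^sup>2 / (2 * (s / u)) = (u * x - \<mu>)\<^sup>2 / (2 * s * u)"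
    using assms by (simp add: field_simps power2_eq_square)
  moreover have "- x\<^sup>2 / 2 - (x - \<mu>)\<^sup>2 / (2 * s) = - \<mu>\<^sup>2 / (2 * u) - (u * x - \<mu>)\<^sup>2 / (2 * s * u)"
    using assms \<open>u > 0\<close> by (simp add: field_simps power2_eq_square) (simp add: u_def algebra_simps)
  ultimately show ?thesis
    unfolding u_def by simp
qed

lemma hermite_fun_times_gauss_density:
  assumes \<sigma>_pos: "\<sigma> > 0"
  shows "hermite_fun n x * gauss_density \<sigma> \<mu> x
    = exp (- \<mu>\<^sup>2 / (2 * (\<sigma>\<^sup>2 + 1))) / (sqrt (\<sigma>\<^sup>2 + 1) * sqrt (sqrt pi * 2 ^ n * fact n))
      * (normal_density (\<mu> / (\<sigma>\<^sup>2 + 1)) (\<sigma> / sqrt (\<sigma>\<^sup>2 + 1)) x * hermite n x)"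
proof -
  define t where "t = \<sigma> / sqrt (\<sigma>\<^sup>2 + 1)"
  have pos: "\<sigma>\<^sup>2 + 1 > 0"
    by (simp add: add_nonneg_pos)
  have t2: "t\<^sup>2 = \<sigma>\<^sup>2 / (\<sigma>\<^sup>2 + 1)"
    unfolding t_def using pos by (simp add: power_divide)
  have "- x\<^sup>2 / 2 + - (x - \<mu>)\<^sup>2 / (2 * \<sigma>\<^sup>2)
      = - \<mu>\<^sup>2 / (2 * (\<sigma>\<^sup>2 + 1)) + - (x - \<mu> / (\<sigma>\<^sup>2 + 1))\<^sup>2 / (2 * t\<^sup>2)"
    using gaussian_exponent_complete_square[of "\<sigma>\<^sup>2" x \<mu>] \<sigma>_pos unfolding t2 by simp
  then have "exp (- x\<^sup>2 / 2) * exp (- (x - \<mu>)\<^sup>2 / (2 * \<sigma>\<^sup>2))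
      = exp (- \<mu>\<^sup>2 / (2 * (\<sigma>\<^sup>2 + 1))) * exp (- (x - \<mu> / (\<sigma>\<^sup>2 + 1))\<^sup>2 / (2 * t\<^sup>2))"
    unfolding exp_add[symmetric] by (rule arg_cong[where f = exp])
  moreover have "sqrt (2 * pi * \<sigma>\<^sup>2) = sqrt (\<sigma>\<^sup>2 + 1) * sqrt (2 * pi * t\<^sup>2)"
    unfolding t2 real_sqrt_mult[symmetric] using pos by (simp add: field_simps)
  ultimately show ?thesis
    unfolding hermite_fun_def gauss_density_def normal_density_def t_def[symmetric]
    using pos by (simp add: field_simps)
qed

lemma integral_hermite_fun_gauss_density:
  assumes \<sigma>_pos: "\<sigma> > 0"
  shows "(LBINT x. hermite_fun n x * gauss_density \<sigma> \<mu> x)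
    = exp (- \<mu>\<^sup>2 / (2 * (\<sigma>\<^sup>2 + 1))) / (sqrt (\<sigma>\<^sup>2 + 1) * sqrt (sqrt pi * 2 ^ n * fact n))
      * gen_hermite ((\<sigma>\<^sup>2 - 1) / (\<sigma>\<^sup>2 + 1)) n (\<mu> / (\<sigma>\<^sup>2 + 1))"
proof -
  have pos: "\<sigma>\<^sup>2 + 1 > 0"
    by (simp add: add_nonneg_pos)
  have "2 * (\<sigma> / sqrt (\<sigma>\<^sup>2 + 1))\<^sup>2 - 1 = (\<sigma>\<^sup>2 - 1) / (\<sigma>\<^sup>2 + 1)"
    using pos by (simp add: power_divide field_simps)
  moreover have "\<sigma> / sqrt (\<sigma>\<^sup>2 + 1) > 0"
    using \<sigma>_pos pos by simp
  ultimately show ?thesis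
    unfolding hermite_fun_times_gauss_density[OF \<sigma>_pos] integral_mult_right_zero
    by (simp add: integral_normal_density_hermite)
qed

lemma gauss_ratio_bounds:
  fixes \<sigma> :: real
  assumes "\<sigma> > 0" "\<sigma>\<^sup>2 \<noteq> 1"
  shows "0 < \<bar>(\<sigma>\<^sup>2 - 1) / (\<sigma>\<^sup>2 + 1)\<bar>" "\<bar>(\<sigma>\<^sup>2 - 1) / (\<sigma>\<^sup>2 + 1)\<bar> < 1"
    and "ln \<bar>(\<sigma>\<^sup>2 + 1) / (\<sigma>\<^sup>2 - 1)\<bar> = - ln \<bar>(\<sigma>\<^sup>2 - 1) / (\<sigma>\<^sup>2 + 1)\<bar>"
proof -
  have pos: "\<sigma>\<^sup>2 + 1 > 0" and "\<sigma>\<^sup>2 > 0"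
    using assms by (simp_all add: add_nonneg_pos)
  have "\<bar>(\<sigma>\<^sup>2 - 1) / (\<sigma>\<^sup>2 + 1)\<bar> = \<bar>\<sigma>\<^sup>2 - 1\<bar> / (\<sigma>\<^sup>2 + 1)"
    using pos by simp
  moreover have "0 < \<bar>\<sigma>\<^sup>2 - 1\<bar>" "\<bar>\<sigma>\<^sup>2 - 1\<bar> < \<sigma>\<^sup>2 + 1"
    using assms \<open>\<sigma>\<^sup>2 > 0\<close> by (auto simp: abs_less_iff)
  ultimately show "0 < \<bar>(\<sigma>\<^sup>2 - 1) / (\<sigma>\<^sup>2 + 1)\<bar>" "\<bar>(\<sigma>\<^sup>2 - 1) / (\<sigma>\<^sup>2 + 1)\<bar> < 1"
    using pos by simp_all
  then show "ln \<bar>(\<sigma>\<^sup>2 + 1) / (\<sigma>\<^sup>2 - 1)\<bar> = - ln \<bar>(\<sigma>\<^sup>2 - 1) / (\<sigma>\<^sup>2 + 1)\<bar>"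
    by (simp add: ln_div)
qed

lemma gauss_decay_rate_pos:
  fixes \<sigma> lam :: real
  assumes "\<sigma> > 0"
    and "lam = (if \<sigma>^2 \<noteq> 1 then ln \<bar>(\<sigma>^2 + 1) / (\<sigma>^2 - 1)\<bar> / 4 else 1/4)"
  shows "lam > 0"
proof (cases "\<sigma>\<^sup>2 = 1")
  case False
  note ratio = gauss_ratio_bounds[OF assms(1) False]
  then show ?thesis
    using assms(2) ln_less_zero[OF ratio(1,2)] by simp
qed (use assms(2) in simp)

lemma gauss_threshold_eq:
  fixes \<sigma> \<mu> :: real
  assumes "\<sigma> > 0" "\<sigma>\<^sup>2 \<noteq> 1"
  defines "L \<equiv> ln \<bar>(\<sigma>\<^sup>2 + 1) / (\<sigma>\<^sup>2 - 1)\<bar>"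
  shows "2 * (\<mu> / (\<sigma>\<^sup>2 + 1))\<^sup>2 / (\<bar>(\<sigma>\<^sup>2 - 1) / (\<sigma>\<^sup>2 + 1)\<bar> * (L / 4)\<^sup>2)
    = 32 * \<mu>\<^sup>2 / \<bar>\<sigma>^4 - 1\<bar> * L powi (-2)"
proof -
  have pos: "\<sigma>\<^sup>2 + 1 > 0"
    by (simp add: add_nonneg_pos)
  have "\<sigma>^4 - 1 = (\<sigma>\<^sup>2 - 1) * (\<sigma>\<^sup>2 + 1)"
    by (simp add: power4_eq_xxxx power2_eq_square algebra_simps)
  then have "\<bar>\<sigma>^4 - 1\<bar> = \<bar>\<sigma>\<^sup>2 - 1\<bar> * (\<sigma>\<^sup>2 + 1)"
    using pos by (simp add: abs_mult)
  moreover have "\<bar>(\<sigma>\<^sup>2 - 1) / (\<sigma>\<^sup>2 + 1)\<bar> = \<bar>\<sigma>\<^sup>2 - 1\<bar> / (\<sigma>\<^sup>2 + 1)"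
    using pos by simp
  moreover have "L > 0" "\<bar>\<sigma>\<^sup>2 - 1\<bar> > 0"
    using gauss_ratio_bounds[OF assms(1,2)] assms(2) unfolding L_def by simp_all
  moreover have "2 * (\<mu> / u)\<^sup>2 / (d / u * (L / 4)\<^sup>2) = 32 * \<mu>\<^sup>2 / (d * u) * L powi (-2)"
    if "u > 0" "d > 0" "L > 0" for u d L :: real
    using that by (simp add: power_int_minus_divide field_simps power2_eq_square)
  ultimately show ?thesis
    using pos by simp
qed

lemma gen_hermite_gauss_sq_le_exp_decay:
  fixes \<sigma> \<mu> lam :: real and N n :: nat
  assumes \<sigma>_pos: "\<sigma> > 0"
    and lam: "lam = (if \<sigma>^2 \<noteq> 1 then ln \<bar>(\<sigma>^2 + 1) / (\<sigma>^2 - 1)\<bar> / 4 else 1/4)"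
    and N_pos: "N \<ge> 1"
    and N_large: "real N \<ge> (if \<sigma>^2 \<noteq> 1
            then 32 * \<mu>^2 / \<bar>\<sigma>^4 - 1\<bar> * (ln \<bar>(\<sigma>^2 + 1) / (\<sigma>^2 - 1)\<bar>) powi (-2)
            else exp (3/2) * \<mu>^2 / 2)"
    and "N \<le> n"
  shows "(gen_hermite ((\<sigma>\<^sup>2 - 1) / (\<sigma>\<^sup>2 + 1)) n (\<mu> / (\<sigma>\<^sup>2 + 1)))\<^sup>2
    \<le> 2 ^ n * fact n * exp (- 2 * lam * real n)"
proof -
  have n: "n > 0" "real N \<le> real n"
    using N_pos \<open>N \<le> n\<close> by simp_all
  show ?thesis
  proof (cases "\<sigma>\<^sup>2 = 1")
    case True
    then have "exp (3/2) * \<mu>\<^sup>2 / 2 \<le> real N"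
      using N_large by simp
    moreover have "2 * exp (3/2) * (\<mu> / (\<sigma>\<^sup>2 + 1))\<^sup>2 = exp (3/2) * \<mu>\<^sup>2 / 2"
      using True by (simp add: power_divide)
    ultimately have "2 * exp (3/2) * (\<mu> / (\<sigma>\<^sup>2 + 1))\<^sup>2 \<le> real n"
      using n(2) by linarith
    note bound = gen_hermite_0_sq_le_exp_decay[OF n(1) this]
    have "lam = 1/4"
      using True lam by simp
    then show ?thesis
      unfolding \<open>lam = 1/4\<close> using bound True by simp
  next
    case False
    note ratio = gauss_ratio_bounds[OF \<sigma>_pos False]
    have lam_ln: "lam = ln \<bar>(\<sigma>\<^sup>2 + 1) / (\<sigma>\<^sup>2 - 1)\<bar> / 4"
      using lam False by simp
    then have lam_r: "lam = - ln \<bar>(\<sigma>\<^sup>2 - 1) / (\<sigma>\<^sup>2 + 1)\<bar> / 4"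
      using ratio(3) by simp
    have "2 * (\<mu> / (\<sigma>\<^sup>2 + 1))\<^sup>2 / (\<bar>(\<sigma>\<^sup>2 - 1) / (\<sigma>\<^sup>2 + 1)\<bar> * lam\<^sup>2) \<le> real n"
      unfolding lam_ln gauss_threshold_eq[OF \<sigma>_pos False] using N_large False n(2) by simp
    then show ?thesis
      by (rule gen_hermite_sq_le_exp_decay_ln_abs[OF ratio(1,2) lam_r n(1)])
  qed
qed

lemma integral_hermite_fun_gauss_density_sq_le:
  fixes \<sigma> \<mu> lam :: real and N n :: nat
  assumes "\<sigma> > 0"
    and "lam = (if \<sigma>^2 \<noteq> 1 then ln \<bar>(\<sigma>^2 + 1) / (\<sigma>^2 - 1)\<bar> / 4 else 1/4)"
    and "N \<ge> 1"
    and "real N \<ge> (if \<sigma>^2 \<noteq> 1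
            then 32 * \<mu>^2 / \<bar>\<sigma>^4 - 1\<bar> * (ln \<bar>(\<sigma>^2 + 1) / (\<sigma>^2 - 1)\<bar>) powi (-2)
            else exp (3/2) * \<mu>^2 / 2)"
    and "N \<le> n"
  shows "(LBINT x. hermite_fun n x * gauss_density \<sigma> \<mu> x)\<^sup>2
    \<le> exp (- \<mu>\<^sup>2 / (\<sigma>\<^sup>2 + 1)) / ((\<sigma>\<^sup>2 + 1) * sqrt pi) * exp (- 2 * lam) ^ n"
proof -
  define g where "g = gen_hermite ((\<sigma>\<^sup>2 - 1) / (\<sigma>\<^sup>2 + 1)) n (\<mu> / (\<sigma>\<^sup>2 + 1))"
  have pos: "\<sigma>\<^sup>2 + 1 > 0"
    by (simp add: add_nonneg_pos)
  have "2 * (- \<mu>\<^sup>2 / (2 * (\<sigma>\<^sup>2 + 1))) = - \<mu>\<^sup>2 / (\<sigma>\<^sup>2 + 1)"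
    using pos by (simp add: field_simps)
  then have "exp (- \<mu>\<^sup>2 / (2 * (\<sigma>\<^sup>2 + 1))) ^ 2 = exp (- \<mu>\<^sup>2 / (\<sigma>\<^sup>2 + 1))"
    by (metis exp_double)
  then have "(LBINT x. hermite_fun n x * gauss_density \<sigma> \<mu> x)\<^sup>2
      = exp (- \<mu>\<^sup>2 / (\<sigma>\<^sup>2 + 1)) / ((\<sigma>\<^sup>2 + 1) * sqrt pi) * (g\<^sup>2 / (2 ^ n * fact n))"
    unfolding integral_hermite_fun_gauss_density[OF assms(1)] g_def[symmetric]
    using pos by (simp add: power_mult_distrib power_divide)
  also have "\<dots> \<le> exp (- \<mu>\<^sup>2 / (\<sigma>\<^sup>2 + 1)) / ((\<sigma>\<^sup>2 + 1) * sqrt pi) * exp (- 2 * lam) ^ n"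
    using gen_hermite_gauss_sq_le_exp_decay[OF assms] pos unfolding g_def
    by (intro mult_left_mono) (simp_all add: divide_le_eq mult_ac flip: exp_of_nat_mult)
  finally show ?thesis .
qed

lemma sqrt_gauss_geometric_tail_eq:
  fixes \<sigma> \<mu> lam :: real and N :: nat
  assumes "lam > 0"
  shows "sqrt (exp (- \<mu>\<^sup>2 / (\<sigma>\<^sup>2 + 1)) / ((\<sigma>\<^sup>2 + 1) * sqrt pi) * exp (- 2 * lam) ^ N / (1 - exp (- 2 * lam)))
    = exp (- (\<mu>^2) / (2 * (\<sigma>^2 + 1)) - lam * real N)
      / (pi powr (1/4) * sqrt ((\<sigma>^2 + 1) * (1 - exp (- 2 * lam))))"
proof (rule real_sqrt_unique)
  have pos: "\<sigma>\<^sup>2 + 1 > 0"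
    by (simp add: add_nonneg_pos)
  have "2 * (- \<mu>\<^sup>2 / (2 * (\<sigma>\<^sup>2 + 1)) - lam * real N) = - \<mu>\<^sup>2 / (\<sigma>\<^sup>2 + 1) + real N * (- 2 * lam)"
    using pos by (simp add: field_simps)
  then have "exp (- \<mu>\<^sup>2 / (2 * (\<sigma>\<^sup>2 + 1)) - lam * real N) ^ 2 = exp (- \<mu>\<^sup>2 / (\<sigma>\<^sup>2 + 1)) * exp (- 2 * lam) ^ N"
    by (metis exp_double exp_add exp_of_nat_mult)
  moreover have "(pi powr (1/4))\<^sup>2 = sqrt pi"
    by (simp add: powr_power powr_half_sqrt)
  ultimately show "(exp (- (\<mu>^2) / (2 * (\<sigma>^2 + 1)) - lam * real N)
      / (pi powr (1/4) * sqrt ((\<sigma>^2 + 1) * (1 - exp (- 2 * lam)))))\<^sup>2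
    = exp (- \<mu>\<^sup>2 / (\<sigma>\<^sup>2 + 1)) / ((\<sigma>\<^sup>2 + 1) * sqrt pi) * exp (- 2 * lam) ^ N / (1 - exp (- 2 * lam))"
    using pos assms by (simp add: power_divide power_mult_distrib)
qed (use assms in simp)

theorem lemma4p9:
  fixes \<sigma> \<mu> :: real and N :: nat and \<alpha> :: "nat \<Rightarrow> real" and lam :: real
  assumes "\<sigma> > 0"
    and "\<And>n. \<alpha> n = (LBINT x. hermite_fun n x * gauss_density \<sigma> \<mu> x)"
    and "lam = (if \<sigma>^2 \<noteq> 1 then ln \<bar>(\<sigma>^2 + 1) / (\<sigma>^2 - 1)\<bar> / 4 else 1/4)"
    and "N \<ge> 1"
    and "real N \<ge> (if \<sigma>^2 \<noteq> 1
            then 32 * \<mu>^2 / \<bar>\<sigma>^4 - 1\<bar> * (ln \<bar>(\<sigma>^2 + 1) / (\<sigma>^2 - 1)\<bar>) powi (-2)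
            else exp (3/2) * \<mu>^2 / 2)"
  shows "sqrt (\<Sum>n. (\<alpha> (n + N))^2)
           \<le> exp (- (\<mu>^2) / (2 * (\<sigma>^2 + 1)) - lam * real N)
              / (pi powr (1/4) * sqrt ((\<sigma>^2 + 1) * (1 - exp (- 2 * lam))))"
proof -
  have "lam > 0"
    using gauss_decay_rate_pos[OF assms(1,3)] .
  have "(\<alpha> n)\<^sup>2 \<le> exp (- \<mu>\<^sup>2 / (\<sigma>\<^sup>2 + 1)) / ((\<sigma>\<^sup>2 + 1) * sqrt pi) * exp (- 2 * lam) ^ n"
    if "N \<le> n" for n
    unfolding assms(2) using integral_hermite_fun_gauss_density_sq_le[OF assms(1,3-5) that] .
  then have "(\<Sum>n. (\<alpha> (n + N))\<^sup>2)
      \<le> exp (- \<mu>\<^sup>2 / (\<sigma>\<^sup>2 + 1)) / ((\<sigma>\<^sup>2 + 1) * sqrt pi) * exp (- 2 * lam) ^ N / (1 - exp (- 2 * lam))"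
    using \<open>lam > 0\<close> by (intro suminf_shift_le_geometric) auto
  then show ?thesis
    unfolding sqrt_gauss_geometric_tail_eq[OF \<open>lam > 0\<close>, symmetric] by (rule real_sqrt_le_mono)
qed

end
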